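(* Let $S$ be a finite pseudo-nilpotent semigroup. If $I$ is an ideal of $S$ such that $\mathcal{N}_I$ has no edges, then every element of $I$ is an isolated vertex of $\mathcal{N}_S$.
   Context: For a semigroup $S$, $S^1$ denotes $S$ with an identity adjoined (if $S$ has none). For $x,y\in S$ and $z_1,z_2,\ldots\in S^1$ define recursively $\lambda_0=x$, $\rho_0=y$, $\lambda_{n+1}=\lambda_n z_{n+1}\rho_n$, $\rho_{n+1}=\rho_n z_{n+1}\lambda_n$; write $\lambda_n(x,y,z_1,\ldots,z_n)$ and $\rho_n(x,y,z_1,\ldots,z_n)$. A semigroup $S$ is nilpotent (in the sense of Mal'cev) if there is a positive integer $n$ with $\lambda_n(a,b,c_1,\ldots,c_n)=\rho_n(a,b,c_1,\ldots,c_n)$ for all $a,b\in S$ and $c_1,\ldots,c_n\in S^1$. $\langle X\rangle$ denotes the subsemigroup generated by $X$. The upper non-nilpotent graph $\mathcal{N}_S$ has vertex set $S$, with an edge between $x$ and $y$ iff $\langle x,y\rangle$ is not nilpotent. The empty set is regarded as an ideal; for an ideal $I$ of $S$, $S/I$ is the Rees factor semigroup, with $S/\emptyset=S$. A semigroup $S$ is pseudo-nilpotent if the following holds: whenever $x,y\in S$, $w_1,\ldots,w_m\in S^1$, $T$ is the subsemigroup generated by $x,y$ and those $w_i$ lying in $S$, $I$ is an ideal (possibly empty) of $T$, and $t<m$ are non-negative integers such that, writing $\lambda_k=\lambda_k(x,y,w_1,\ldots,w_k)$ and $\rho_k=\rho_k(x,y,w_1,\ldots,w_k)$, one has $\lambda_t\neq\rho_t$,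 $(\lambda_t,\rho_t)=(\lambda_m,\rho_m)$ and $\lambda_m,\rho_m\notin I$, then for every $0\le i\le m$ there is an edge in $\mathcal{N}_{T/I}$ between (the images of) $\lambda_i$ and $\rho_i$. *)

theory Defs
  imports Main
begin

definition semigroup_on :: "'a set \<Rightarrow> ('a \<Rightarrow> 'a \<Rightarrow> 'a) \<Rightarrow> bool" where
  "semigroup_on S f \<longleftrightarrow> (\<forall>x\<in>S. \<forall>y\<in>S. f x y \<in> S) \<and>
     (\<forall>x\<in>S. \<forall>y\<in>S. \<forall>z\<in>S. f (f x y) z = f x (f y z))"

text \<open>Elements of S^1 are represented as 'a option: None is the adjoined identity,
  Some z with z in S an element of S.\<close>
definition in_S1 :: "'a set \<Rightarrow> 'a option \<Rightarrow> bool" where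
  "in_S1 S z \<longleftrightarrow> (case z of None \<Rightarrow> True | Some a \<Rightarrow> a \<in> S)"

fun mul3 :: "('a \<Rightarrow> 'a \<Rightarrow> 'a) \<Rightarrow> 'a \<Rightarrow> 'a option \<Rightarrow> 'a \<Rightarrow> 'a" where
  "mul3 f a None b = f a b"
| "mul3 f a (Some z) b = f (f a z) b"

text \<open>lam_rho f x y z n = (lambda_n, rho_n) for x, y and z_1, z_2, ... (z 0 is unused).\<close>
fun lam_rho :: "('a \<Rightarrow> 'a \<Rightarrow> 'a) \<Rightarrow> 'a \<Rightarrow> 'a \<Rightarrow> (nat \<Rightarrow> 'a option) \<Rightarrow> nat \<Rightarrow> 'a \<times> 'a" where
  "lam_rho f x y z 0 = (x, y)"
| "lam_rho f x y z (Suc n) =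
     (let (l, r) = lam_rho f x y z n in (mul3 f l (z (Suc n)) r, mul3 f r (z (Suc n)) l))"

definition lam :: "('a \<Rightarrow> 'a \<Rightarrow> 'a) \<Rightarrow> 'a \<Rightarrow> 'a \<Rightarrow> (nat \<Rightarrow> 'a option) \<Rightarrow> nat \<Rightarrow> 'a" where
  "lam f x y z n = fst (lam_rho f x y z n)"

definition rho :: "('a \<Rightarrow> 'a \<Rightarrow> 'a) \<Rightarrow> 'a \<Rightarrow> 'a \<Rightarrow> (nat \<Rightarrow> 'a option) \<Rightarrow> nat \<Rightarrow> 'a" where
  "rho f x y z n = snd (lam_rho f x y z n)"

definition nilpotent :: "'a set \<Rightarrow> ('a \<Rightarrow> 'a \<Rightarrow> 'a) \<Rightarrow> bool" where
  "nilpotent S f \<longleftrightarrow> (\<exists>n>0. \<forall>a\<in>S. \<forall>b\<in>S. \<forall>c. (\<forall>i\<in>{1..n}. in_S1 S (c i)) \<longrightarrow>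
       lam f a b c n = rho f a b c n)"

inductive_set gen :: "('a \<Rightarrow> 'a \<Rightarrow> 'a) \<Rightarrow> 'a set \<Rightarrow> 'a set" for f X where
  gen_base: "x \<in> X \<Longrightarrow> x \<in> gen f X"
| gen_mult: "x \<in> gen f X \<Longrightarrow> y \<in> gen f X \<Longrightarrow> f x y \<in> gen f X"

definition nn_edge :: "'a set \<Rightarrow> ('a \<Rightarrow> 'a \<Rightarrow> 'a) \<Rightarrow> 'a \<Rightarrow> 'a \<Rightarrow> bool" where
  "nn_edge S f x y \<longleftrightarrow> x \<in> S \<and> y \<in> S \<and> \<not> nilpotent (gen f {x, y}) f"

definition is_ideal :: "'a set \<Rightarrow> ('a \<Rightarrow> 'a \<Rightarrow> 'a) \<Rightarrow> 'a set \<Rightarrow> bool" where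
  "is_ideal S f I \<longleftrightarrow> I \<subseteq> S \<and> (\<forall>s\<in>S. \<forall>i\<in>I. f s i \<in> I \<and> f i s \<in> I)"

text \<open>Rees factor semigroup T/I on 'a option: None is the zero (the class of I),
  Some x for x in T - I.  For I empty it is (a copy of) T itself.\<close>
definition rees :: "'a set \<Rightarrow> 'a set \<Rightarrow> 'a option set" where
  "rees T I = (if I = {} then Some ` T else insert None (Some ` (T - I)))"

fun rees_op :: "('a \<Rightarrow> 'a \<Rightarrow> 'a) \<Rightarrow> 'a set \<Rightarrow> 'a option \<Rightarrow> 'a option \<Rightarrow> 'a option" where
  "rees_op f I (Some x) (Some y) = (if f x y \<in> I then None else Some (f x y))"
| "rees_op f I _ _ = None"

definition rees_img :: "'a set \<Rightarrow> 'a \<Rightarrow> 'a option" where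
  "rees_img I x = (if x \<in> I then None else Some x)"

definition pseudo_nilpotent :: "'a set \<Rightarrow> ('a \<Rightarrow> 'a \<Rightarrow> 'a) \<Rightarrow> bool" where
  "pseudo_nilpotent S f \<longleftrightarrow>
    (\<forall>x\<in>S. \<forall>y\<in>S. \<forall>m w. (\<forall>i\<in>{1..m}. in_S1 S (w i)) \<longrightarrow>
      (let T = gen f ({x, y} \<union> {a. \<exists>i\<in>{1..m}. w i = Some a}) in
       \<forall>I t. is_ideal T f I \<longrightarrow> t < m \<longrightarrow>
         lam f x y w t \<noteq> rho f x y w t \<longrightarrow>
         (lam f x y w t, rho f x y w t) = (lam f x y w m, rho f x y w m) \<longrightarrow>
         lam f x y w m \<notin> I \<longrightarrow> rho f x y w m \<notin> I \<longrightarrow>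
         (\<forall>i\<le>m. nn_edge (rees T I) (rees_op f I)
                    (rees_img I (lam f x y w i)) (rees_img I (rho f x y w i)))))"

end

theory Submission imports Defs begin

text \<open>Suppose \<open>x \<in> I\<close> and \<open>\<langle>x, y\<rangle>\<close> is not nilpotent, so some \<open>a, b, c\<^sub>i\<close> in \<open>T = \<langle>x, y\<rangle>\<close>
  give \<open>\<lambda>\<^sub>k \<noteq> \<rho>\<^sub>k\<close> for all \<open>k \<le> |T|\<^sup>2 + 1\<close>.  Every element of \<open>T\<close> lies in \<open>I\<close> or in the
  commutative semigroup \<open>\<langle>y\<rangle>\<close>; in the latter case \<open>\<lambda>\<^sub>1 = \<rho>\<^sub>1\<close>, so \<open>\<lambda>\<^sub>1, \<rho>\<^sub>1\<close> and hence all later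
  \<open>\<lambda>\<^sub>k, \<rho>\<^sub>k\<close> lie in the ideal \<open>I\<close>.  By pigeonhole the pair \<open>(\<lambda>\<^sub>k, \<rho>\<^sub>k)\<close> repeats, and
  pseudo-nilpotency with the empty ideal makes \<open>\<langle>\<lambda>\<^sub>t, \<rho>\<^sub>t\<rangle>\<close> non-nilpotent: an edge of
  \<open>\<N>\<^sub>I\<close>.\<close>

lemma lam_0 [simp]: "lam f x y z 0 = x"
  and rho_0 [simp]: "rho f x y z 0 = y"
  by (simp_all add: lam_def rho_def)

lemma lam_Suc: "lam f x y z (Suc n) = mul3 f (lam f x y z n) (z (Suc n)) (rho f x y z n)"
  and rho_Suc: "rho f x y z (Suc n) = mul3 f (rho f x y z n) (z (Suc n)) (lam f x y z n)"
  by (simp_all add: lam_def rho_def split_def Let_def)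

lemma lam_eq_rho_mono:
  assumes "k \<le> n" "lam f x y z k = rho f x y z k"
  shows "lam f x y z n = rho f x y z n"
  using assms by (induction n rule: dec_induct) (simp_all add: lam_Suc rho_Suc)

lemma in_S1_mono: "A \<subseteq> B \<Longrightarrow> in_S1 A z \<Longrightarrow> in_S1 B z"
  by (cases z) (auto simp: in_S1_def)

lemma mul3_closed: "l \<in> A \<Longrightarrow> r \<in> A \<Longrightarrow> in_S1 A z \<Longrightarrow> (\<And>u v. u \<in> A \<Longrightarrow> v \<in> A \<Longrightarrow> f u v \<in> A)
    \<Longrightarrow> mul3 f l z r \<in> A"
  by (cases z) (auto simp: in_S1_def)

lemma lam_rho_in_gen:
  assumes "x \<in> gen f X" "y \<in> gen f X" "\<forall>i\<in>{1..n}. in_S1 (gen f X) (z i)" "k \<le> n"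
  shows "lam f x y z k \<in> gen f X \<and> rho f x y z k \<in> gen f X"
  using assms(4)
  by (induction k) (auto simp: lam_Suc rho_Suc assms intro!: mul3_closed gen_mult)

lemma gen_subset:
  assumes "semigroup_on S f" "X \<subseteq> S"
  shows "gen f X \<subseteq> S"
proof
  fix u assume "u \<in> gen f X"
  then show "u \<in> S"
    using assms by (induction rule: gen.induct) (auto simp: semigroup_on_def)
qed

lemma gen_commute_with:
  assumes S: "semigroup_on S f" "X \<subseteq> S" "w \<in> S"
    and comm: "\<forall>v\<in>X. f w v = f v w" and "u \<in> gen f X"
  shows "f w u = f u w"
  using \<open>u \<in> gen f X\<close>
proof (induction rule: gen.induct)
  case (gen_base u)
  then show ?case using comm by blast
next
  case (gen_mult u v)
  have uv: "u \<in> S" "v \<in> S" using gen_subset[OF S(1,2)] gen_mult.hyps by auto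
  have "f w (f u v) = f (f w u) v" using S uv by (simp add: semigroup_on_def)
  also have "\<dots> = f u (f w v)" using gen_mult.IH S uv by (simp add: semigroup_on_def)
  also have "\<dots> = f (f u v) w" using gen_mult.IH S uv by (simp add: semigroup_on_def)
  finally show ?case .
qed

lemma gen_commute:
  assumes S: "semigroup_on S f" "X \<subseteq> S"
    and comm: "\<forall>u\<in>X. \<forall>v\<in>X. f u v = f v u" and "u \<in> gen f X" "v \<in> gen f X"
  shows "f u v = f v u"
proof -
  have "\<forall>x\<in>X. f v x = f x v"
    using gen_commute_with[OF S _ _ \<open>v \<in> gen f X\<close>] comm \<open>X \<subseteq> S\<close> by (metis subsetD)
  moreover have "v \<in> S" using gen_subset[OF S] \<open>v \<in> gen f X\<close> by blast
  ultimately show ?thesis using gen_commute_with[OF S _ _ \<open>u \<in> gen f X\<close>] by metis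
qed

lemma gen_Un_ideal_subset:
  assumes S: "semigroup_on S f" and I: "is_ideal S f I" and "X \<subseteq> I" "Y \<subseteq> S"
  shows "gen f (X \<union> Y) \<subseteq> I \<union> gen f Y"
proof
  have XY: "X \<union> Y \<subseteq> S" using assms by (auto simp: is_ideal_def)
  fix u assume "u \<in> gen f (X \<union> Y)"
  then show "u \<in> I \<union> gen f Y"
  proof (induction rule: gen.induct)
    case (gen_base u)
    then show ?case using \<open>X \<subseteq> I\<close> by (auto intro: gen.gen_base)
  next
    case (gen_mult u v)
    have "u \<in> S" "v \<in> S" using gen_subset[OF S XY] gen_mult.hyps by auto
    then show ?case using gen_mult.IH I by (auto simp: is_ideal_def intro: gen.gen_mult)
  qed
qed

lemma mul3_in_ideal:
  assumes S: "semigroup_on S f" and I: "is_ideal S f I"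
    and "l \<in> S" "r \<in> S" "in_S1 S z" "l \<in> I \<or> r \<in> I \<or> z \<in> Some ` I"
  shows "mul3 f l z r \<in> I"
proof (cases z)
  case None
  then show ?thesis using assms by (auto simp: is_ideal_def)
next
  case (Some w)
  have "w \<in> S" "f l w \<in> S" using assms Some by (auto simp: in_S1_def semigroup_on_def)
  then show ?thesis using assms Some by (auto simp: is_ideal_def)
qed

lemma lam_rho_stay_in_ideal:
  assumes S: "semigroup_on S f" and I: "is_ideal S f I"
    and z: "\<forall>i\<in>{k<..n}. in_S1 S (z i)"
    and "lam f x y z k \<in> I" "rho f x y z k \<in> I" "k \<le> j" "j \<le> n"
  shows "lam f x y z j \<in> I \<and> rho f x y z j \<in> I"
  using \<open>k \<le> j\<close> \<open>j \<le> n\<close>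
proof (induction j rule: dec_induct)
  case base
  then show ?case using assms by blast
next
  case (step j)
  have "lam f x y z j \<in> S" "rho f x y z j \<in> S" "in_S1 S (z (Suc j))"
    using step I z by (auto simp: is_ideal_def)
  then show ?case
    using step mul3_in_ideal[OF S I] by (simp add: lam_Suc rho_Suc)
qed

lemma mul3_swap:
  assumes S: "semigroup_on S f" "C \<subseteq> S"
    and comm: "\<forall>u\<in>C. \<forall>v\<in>C. f u v = f v u" and "l \<in> C" "r \<in> C" "in_S1 C z"
  shows "mul3 f l z r = mul3 f r z l"
proof (cases z)
  case None
  then show ?thesis using comm assms by simp
next
  case (Some w)
  have w: "w \<in> C" using Some \<open>in_S1 C z\<close> by (simp add: in_S1_def)
  have assoc: "f (f u v) s = f u (f v s)" if "u \<in> C" "v \<in> C" "s \<in> C" for u v s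
    using S that by (auto simp: semigroup_on_def subset_iff)
  have "f (f l w) r = f (f w l) r" using comm w assms by simp
  also have "\<dots> = f w (f l r)" using assoc[OF w \<open>l \<in> C\<close> \<open>r \<in> C\<close>] .
  also have "\<dots> = f w (f r l)" using comm assms by simp
  also have "\<dots> = f (f w r) l" using assoc[OF w \<open>r \<in> C\<close> \<open>l \<in> C\<close>] by simp
  also have "\<dots> = f (f r w) l" using comm w assms by simp
  finally show ?thesis using Some by simp
qed

lemma lam_rho_1_in_ideal:
  assumes S: "semigroup_on S f" and I: "is_ideal S f I" and "x \<in> I" "y \<in> S"
    and ab: "a \<in> gen f {x, y}" "b \<in> gen f {x, y}" and z: "in_S1 (gen f {x, y}) (z 1)"
    and ne: "lam f a b z 1 \<noteq> rho f a b z 1"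
  shows "lam f a b z 1 \<in> I \<and> rho f a b z 1 \<in> I"
proof -
  have "{x, y} \<subseteq> S" using assms I by (auto simp: is_ideal_def)
  then have T: "gen f {x, y} \<subseteq> S" using gen_subset[OF S] by blast
  have split: "gen f {x, y} \<subseteq> I \<union> gen f {y}"
    using gen_Un_ideal_subset[OF S I, of "{x}" "{y}"] \<open>x \<in> I\<close> \<open>y \<in> S\<close> by (simp add: insert_commute)
  have lr: "lam f a b z 1 = mul3 f a (z 1) b" "rho f a b z 1 = mul3 f b (z 1) a"
    by (simp_all add: lam_Suc[where n = 0, simplified] rho_Suc[where n = 0, simplified])
  have aS: "a \<in> S" "b \<in> S" using ab T by auto
  have zS: "in_S1 S (z 1)" using in_S1_mono[OF T z] .
  show ?thesis
  proof (cases "a \<in> I \<or> b \<in> I \<or> z 1 \<in> Some ` I")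
    case True
    then have "mul3 f a (z 1) b \<in> I" "mul3 f b (z 1) a \<in> I"
      using mul3_in_ideal[OF S I aS(1,2) zS] mul3_in_ideal[OF S I aS(2,1) zS] by blast+
    then show ?thesis using lr by simp
  next
    case False
    then have ay: "a \<in> gen f {y}" "b \<in> gen f {y}" using ab split by blast+
    have zy: "in_S1 (gen f {y}) (z 1)"
    proof (cases "z 1")
      case (Some w)
      then have "w \<in> gen f {x, y}" "w \<notin> I" using z False by (auto simp: in_S1_def)
      then show ?thesis using Some split by (auto simp: in_S1_def)
    qed (simp add: in_S1_def)
    have y: "{y} \<subseteq> S" using \<open>y \<in> S\<close> by simp
    have "\<forall>u\<in>gen f {y}. \<forall>v\<in>gen f {y}. f u v = f v u"
      using gen_commute[OF S y] by simp
    then have "mul3 f a (z 1) b = mul3 f b (z 1) a"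
      using mul3_swap[OF S gen_subset[OF S y] _ ay zy] by blast
    then show ?thesis using lr ne by simp
  qed
qed

lemma lam_rho_in_ideal:
  assumes S: "semigroup_on S f" and I: "is_ideal S f I" and "x \<in> I" "y \<in> S"
    and ab: "a \<in> gen f {x, y}" "b \<in> gen f {x, y}" and z: "\<forall>i\<in>{1..n}. in_S1 (gen f {x, y}) (z i)"
    and ne: "lam f a b z n \<noteq> rho f a b z n" and k: "1 \<le> k" "k \<le> n"
  shows "lam f a b z k \<in> I \<and> rho f a b z k \<in> I"
proof -
  have "lam f a b z 1 \<noteq> rho f a b z 1" using lam_eq_rho_mono[of 1 n f a b z] k ne by auto
  then have "lam f a b z 1 \<in> I \<and> rho f a b z 1 \<in> I"
    using lam_rho_1_in_ideal[OF S I \<open>x \<in> I\<close> \<open>y \<in> S\<close> ab] z k by simp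
  moreover have "{x, y} \<subseteq> S" using \<open>x \<in> I\<close> \<open>y \<in> S\<close> I by (auto simp: is_ideal_def)
  then have "gen f {x, y} \<subseteq> S" using gen_subset[OF S] by blast
  then have "\<forall>i\<in>{1<..n}. in_S1 S (z i)" using z in_S1_mono by fastforce
  ultimately show ?thesis using lam_rho_stay_in_ideal[OF S I _ _ _ k] by blast
qed

lemma gen_rees_empty: "gen (rees_op f {}) (Some ` X) = Some ` gen f X"
proof
  show "gen (rees_op f {}) (Some ` X) \<subseteq> Some ` gen f X"
  proof
    fix u assume "u \<in> gen (rees_op f {}) (Some ` X)"
    then show "u \<in> Some ` gen f X"
      by (induction rule: gen.induct) (auto intro: gen.intros)
  qed
  show "Some ` gen f X \<subseteq> gen (rees_op f {}) (Some ` X)"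
  proof
    fix u assume "u \<in> Some ` gen f X"
    then obtain v where v: "u = Some v" "v \<in> gen f X" by auto
    from v(2) have "Some v \<in> gen (rees_op f {}) (Some ` X)"
    proof (induction rule: gen.induct)
      case (gen_mult x y)
      then have "rees_op f {} (Some x) (Some y) \<in> gen (rees_op f {}) (Some ` X)"
        by (intro gen.gen_mult)
      then show ?case by simp
    qed (auto intro: gen.intros)
    then show "u \<in> gen (rees_op f {}) (Some ` X)" using v by simp
  qed
qed

lemma lam_rho_rees_empty:
  assumes "\<forall>i\<in>{1..n}. z i = map_option Some (z' i)" "k \<le> n"
  shows "lam (rees_op f {}) (Some x) (Some y) z k = Some (lam f x y z' k) \<and>
         rho (rees_op f {}) (Some x) (Some y) z k = Some (rho f x y z' k)"
  using assms(2)
proof (induction k)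
  case (Suc k)
  have "z (Suc k) = map_option Some (z' (Suc k))" using assms(1) Suc by auto
  then show ?case using Suc by (cases "z' (Suc k)") (simp_all add: lam_Suc rho_Suc)
qed simp

lemma nilpotent_rees_empty:
  assumes "nilpotent (gen f X) f"
  shows "nilpotent (gen (rees_op f {}) (Some ` X)) (rees_op f {})"
proof -
  obtain n where n: "n > 0" "\<forall>a\<in>gen f X. \<forall>b\<in>gen f X. \<forall>c. (\<forall>i\<in>{1..n}. in_S1 (gen f X) (c i)) \<longrightarrow>
       lam f a b c n = rho f a b c n" using assms by (auto simp: nilpotent_def)
  show ?thesis unfolding nilpotent_def gen_rees_empty
  proof (intro exI[of _ n] conjI ballI allI impI)
    fix a' b' c assume "a' \<in> Some ` gen f X" "b' \<in> Some ` gen f X"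
      and c: "\<forall>i\<in>{1..n}. in_S1 (Some ` gen f X) (c i)"
    then obtain a b where ab: "a' = Some a" "b' = Some b" "a \<in> gen f X" "b \<in> gen f X" by auto
    define c' where "c' i = map_option the (c i)" for i
    have "c i = map_option Some (c' i) \<and> in_S1 (gen f X) (c' i)" if "i \<in> {1..n}" for i
    proof -
      have "in_S1 (Some ` gen f X) (c i)" using c that by blast
      then show ?thesis by (cases "c i") (auto simp: c'_def in_S1_def)
    qed
    then show "lam (rees_op f {}) a' b' c n = rho (rees_op f {}) a' b' c n"
      using lam_rho_rees_empty[of n c c' n] n ab by simp
  qed (use n in simp)
qed

lemma not_nilpotent_witness:
  assumes "\<not> nilpotent S f" "n > 0"
  shows "\<exists>a\<in>S. \<exists>b\<in>S. \<exists>c. (\<forall>i\<in>{1..n}. in_S1 S (c i)) \<and> lam f a b c n \<noteq> rho f a b c n"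
  using assms unfolding nilpotent_def by blast

text \<open>Pseudo-nilpotency is only needed for the empty ideal, where \<open>T/\<emptyset>\<close> is a copy of \<open>T\<close>.\<close>
lemma pseudo_nilpotent_repetition:
  assumes "pseudo_nilpotent S f" "x \<in> S" "y \<in> S" "\<forall>i\<in>{1..m}. in_S1 S (z i)" "t < m"
    and "lam f x y z t \<noteq> rho f x y z t"
    and "lam f x y z t = lam f x y z m" "rho f x y z t = rho f x y z m"
  shows "\<not> nilpotent (gen f {lam f x y z t, rho f x y z t}) f"
proof
  let ?T = "gen f ({x, y} \<union> {a. \<exists>i\<in>{1..m}. z i = Some a})"
  have "is_ideal ?T f {}" by (simp add: is_ideal_def)
  moreover have "\<forall>J s. is_ideal ?T f J \<longrightarrow> s < m \<longrightarrow>
      lam f x y z s \<noteq> rho f x y z s \<longrightarrow>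
      (lam f x y z s, rho f x y z s) = (lam f x y z m, rho f x y z m) \<longrightarrow>
      lam f x y z m \<notin> J \<longrightarrow> rho f x y z m \<notin> J \<longrightarrow>
      (\<forall>i\<le>m. nn_edge (rees ?T J) (rees_op f J)
                    (rees_img J (lam f x y z i)) (rees_img J (rho f x y z i)))"
    using assms(1-4) unfolding pseudo_nilpotent_def Let_def by blast
  ultimately have "nn_edge (rees ?T {}) (rees_op f {})
      (rees_img {} (lam f x y z t)) (rees_img {} (rho f x y z t))"
    using assms(5-8) by simp
  then have "\<not> nilpotent (gen (rees_op f {}) (Some ` {lam f x y z t, rho f x y z t})) (rees_op f {})"
    by (simp add: nn_edge_def rees_img_def)
  moreover assume "nilpotent (gen f {lam f x y z t, rho f x y z t}) f"
  ultimately show False using nilpotent_rees_empty by blast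
qed

lemma pigeonhole_repetition:
  assumes "finite A" "\<And>k. k \<le> card A + 1 \<Longrightarrow> g k \<in> A"
  obtains t m where "1 \<le> t" "t < m" "m \<le> card A + 1" "g t = g m"
proof -
  have "g ` {1..card A + 1} \<subseteq> A" using assms(2) by auto
  then have "\<not> inj_on g {1..card A + 1}"
    using card_inj_on_le[of g "{1..card A + 1}" A] assms(1) by auto
  then show ?thesis
    using that unfolding inj_on_def by (metis atLeastAtMost_iff linorder_neqE_nat)
qed

lemma lam_rho_repetition:
  assumes "finite (gen f X)" "x \<in> gen f X" "y \<in> gen f X"
    and "\<forall>i\<in>{1..card (gen f X \<times> gen f X) + 1}. in_S1 (gen f X) (z i)"
  obtains t m where "1 \<le> t" "t < m" "m \<le> card (gen f X \<times> gen f X) + 1"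
    "lam f x y z t = lam f x y z m" "rho f x y z t = rho f x y z m"
proof -
  have "(lam f x y z k, rho f x y z k) \<in> gen f X \<times> gen f X"
    if "k \<le> card (gen f X \<times> gen f X) + 1" for k
    using lam_rho_in_gen[OF assms(2-4) that] by blast
  then show ?thesis
    using pigeonhole_repetition[of "gen f X \<times> gen f X" "\<lambda>k. (lam f x y z k, rho f x y z k)"]
      that assms(1) by auto
qed

theorem lemma2p7:
  fixes S :: "'a set" and f :: "'a \<Rightarrow> 'a \<Rightarrow> 'a" and I :: "'a set"
  assumes "finite S"
    and "semigroup_on S f"
    and "pseudo_nilpotent S f"
    and "is_ideal S f I"
    and "\<forall>x\<in>I. \<forall>y\<in>I. \<not> nn_edge I f x y"
  shows "\<forall>x\<in>I. \<forall>y\<in>S. \<not> nn_edge S f x y"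
proof (intro ballI notI)
  fix x y assume "x \<in> I" "y \<in> S" "nn_edge S f x y"
  define T where "T = gen f {x, y}"
  have "{x, y} \<subseteq> S" using \<open>x \<in> I\<close> \<open>y \<in> S\<close> assms(4) by (auto simp: is_ideal_def)
  then have TS: "T \<subseteq> S" unfolding T_def using gen_subset[OF assms(2)] by blast
  define N where "N = card (T \<times> T)"
  have "\<not> nilpotent T f" using \<open>nn_edge S f x y\<close> by (simp add: nn_edge_def T_def)
  then obtain a b c where ab: "a \<in> T" "b \<in> T" and c: "\<forall>i\<in>{1..N + 1}. in_S1 T (c i)"
    and ne: "lam f a b c (N + 1) \<noteq> rho f a b c (N + 1)"
    using not_nilpotent_witness[of T f "N + 1"] by auto
  obtain t m where tm: "1 \<le> t" "t < m" "m \<le> N + 1"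
    and rep: "lam f a b c t = lam f a b c m" "rho f a b c t = rho f a b c m"
    using lam_rho_repetition[of f "{x, y}" a b c] finite_subset[OF TS assms(1)] ab c
    unfolding N_def T_def by blast
  have "lam f a b c t \<noteq> rho f a b c t" using lam_eq_rho_mono[of t "N + 1" f a b c] tm ne by auto
  moreover have "\<forall>i\<in>{1..m}. in_S1 S (c i)" using c in_S1_mono[OF TS] tm(3) by auto
  ultimately have "\<not> nilpotent (gen f {lam f a b c t, rho f a b c t}) f"
    using pseudo_nilpotent_repetition[OF assms(3)] ab TS tm(2) rep by blast
  moreover have "lam f a b c t \<in> I \<and> rho f a b c t \<in> I"
    using lam_rho_in_ideal[OF assms(2,4) \<open>x \<in> I\<close> \<open>y \<in> S\<close>] ab c ne tm unfolding T_def by simp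
  ultimately show False using assms(5) by (simp add: nn_edge_def)
qed

end
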